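(* Let $\mathcal{H}$ be a complex Hilbert space and $B,C\in\mathcal{B}(\mathcal{H})$. Then $$w^2\left(\begin{bmatrix}0 & B\\ C & 0\end{bmatrix}\right)\ge \frac14\max\left\{\big\||B|^2+|C^*|^2\big\|,\ \big\||B^*|^2+|C|^2\big\|\right\}+\frac18\Big|\,\|B+C^*\|^2-\|B-C^*\|^2\,\Big|.$$
   Context: $\mathcal{B}(\mathcal{H})$ is the algebra of bounded linear operators on $\mathcal{H}$ with operator norm $\|\cdot\|$. For $A\in\mathcal{B}(\mathcal{H})$, $A^*$ is the adjoint, $|A|=(A^*A)^{1/2}$, $|A^*|=(AA^* )^{1/2}$, and $w(A)=\sup_{\|x\|=1}|\langle Ax,x\rangle|$ is the numerical radius. The operator matrix $\begin{bmatrix}A&B\\C&D\end{bmatrix}$ acts on $\mathcal{H}\oplus\mathcal{H}$ by $(x_1,x_2)\mapsto(Ax_1+Bx_2,\,Cx_1+Dx_2)$; $0$ denotes the zero operator. *)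

theory Defs
  imports "HOL-Analysis.Analysis"
begin

class chilbert_space = banach +
  fixes scaleC :: "complex \<Rightarrow> 'a \<Rightarrow> 'a"
    and cinner :: "'a \<Rightarrow> 'a \<Rightarrow> complex"
  assumes scaleC_add_right: "scaleC a (x + y) = scaleC a x + scaleC a y"
    and scaleC_add_left: "scaleC (a + b) x = scaleC a x + scaleC b x"
    and scaleC_scaleC: "scaleC a (scaleC b x) = scaleC (a * b) x"
    and scaleC_of_real: "scaleC (complex_of_real r) x = r *\<^sub>R x"
    and cinner_add_left: "cinner (x + y) z = cinner x z + cinner y z"
    and cinner_scaleC_left: "cinner (scaleC a x) y = a * cinner x y"
    and cinner_commute: "cinner x y = cnj (cinner y x)"
    and norm_cinner: "norm x = sqrt (Re (cinner x x))"

definition bop :: "('a::chilbert_space \<Rightarrow> 'a) \<Rightarrow> bool" where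
  "bop T \<longleftrightarrow> bounded_linear T \<and> (\<forall>c x. T (scaleC c x) = scaleC c (T x))"

definition cadj :: "('a::chilbert_space \<Rightarrow> 'a) \<Rightarrow> ('a \<Rightarrow> 'a)" where
  "cadj T = (THE S. \<forall>x y. cinner (T x) y = cinner x (S y))"

definition opmat :: "('a::chilbert_space \<Rightarrow> 'a) \<Rightarrow> ('a \<Rightarrow> 'a) \<Rightarrow> ('a \<Rightarrow> 'a) \<Rightarrow> ('a \<Rightarrow> 'a)
     \<Rightarrow> ('a \<times> 'a \<Rightarrow> 'a \<times> 'a)" where
  "opmat A B C D = (\<lambda>(x1, x2). (A x1 + B x2, C x1 + D x2))"

text \<open>Inner product on H \<oplus> H; its induced norm is the product norm of 'a \<times> 'a.\<close>
definition dsinner :: "'a::chilbert_space \<times> 'a \<Rightarrow> 'a \<times> 'a \<Rightarrow> complex" where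
  "dsinner z u = cinner (fst z) (fst u) + cinner (snd z) (snd u)"

text \<open>Numerical radius of an operator on H \<oplus> H (sup over the closed unit ball,
which equals the sup over the unit sphere when H is nontrivial).\<close>
definition nrad2 :: "('a::chilbert_space \<times> 'a \<Rightarrow> 'a \<times> 'a) \<Rightarrow> real" where
  "nrad2 T = Sup {cmod (dsinner (T z) z) | z. norm z \<le> 1}"

end

theory Submission
  imports Defs
begin

text \<open>Write \<open>T = [0, B; C, 0]\<close>, \<open>S = B + C\<^sup>*\<close>, \<open>D = B - C\<^sup>*\<close>. Since
\<open>\<langle>T (x, y), (x, y)\<rangle> = \<langle>B y, x\<rangle> + \<langle>x, C\<^sup>* y\<rangle>\<close>, suitable choices of \<open>x\<close> (a real, respectively
an imaginary, multiple of \<open>S y\<close>, respectively \<open>D y\<close>) give \<open>\<parallel>S\<parallel> \<le> 2 w(T)\<close> and \<open>\<parallel>D\<parallel> \<le> 2 w(T)\<close>.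
On the other hand the parallelogram law applied to \<open>B u \<plusminus> C\<^sup>* u\<close> (or to \<open>B\<^sup>* u \<plusminus> C u\<close>,
where \<open>B\<^sup>* + C = S\<^sup>*\<close> and \<open>B\<^sup>* - C = D\<^sup>*\<close>) bounds both \<open>\<parallel>B\<^sup>*B + CC\<^sup>*\<parallel>\<close> and \<open>\<parallel>BB\<^sup>* + C\<^sup>*C\<parallel>\<close> by
\<open>(\<parallel>S\<parallel>\<^sup>2 + \<parallel>D\<parallel>\<^sup>2)/2\<close>. The right-hand side of the theorem is therefore at most
\<open>(\<parallel>S\<parallel>\<^sup>2 + \<parallel>D\<parallel>\<^sup>2)/8 + \<bar>\<parallel>S\<parallel>\<^sup>2 - \<parallel>D\<parallel>\<^sup>2\<bar>/8 = max \<parallel>S\<parallel>\<^sup>2 \<parallel>D\<parallel>\<^sup>2 / 4 \<le> w(T)\<^sup>2\<close>.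
The adjoint exists by the Riesz representation theorem, which follows from the existence of
nearest points in closed convex sets.\<close>

lemma cinner_zero_left [simp]: "cinner 0 y = 0"
  using cinner_add_left[of 0 0 y] by simp

lemma cinner_minus_left [simp]: "cinner (- x) y = - cinner x y"
  using cinner_add_left[of x "- x" y] by (simp add: add_eq_0_iff)

lemma cinner_diff_left: "cinner (x - y) z = cinner x z - cinner y z"
  using cinner_add_left[of x "- y" z] by simp

lemma cinner_add_right: "cinner x (y + z) = cinner x y + cinner x z"
  by (metis cinner_add_left cinner_commute complex_cnj_add)

lemma cinner_zero_right [simp]: "cinner x 0 = 0"
  by (metis cinner_commute cinner_zero_left complex_cnj_zero)

lemma cinner_minus_right [simp]: "cinner x (- y) = - cinner x y"
  by (metis cinner_commute cinner_minus_left complex_cnj_minus)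

lemma cinner_diff_right: "cinner x (y - z) = cinner x y - cinner x z"
  by (metis cinner_commute cinner_diff_left complex_cnj_diff)

lemma cinner_scaleC_right: "cinner x (scaleC a y) = cnj a * cinner x y"
  by (metis cinner_commute cinner_scaleC_left complex_cnj_mult)

lemma cinner_scaleR_left: "cinner (r *\<^sub>R x) y = of_real r * cinner x y"
  by (metis cinner_scaleC_left scaleC_of_real)

lemma cinner_scaleR_right: "cinner x (r *\<^sub>R y) = of_real r * cinner x y"
  by (metis cinner_scaleC_right scaleC_of_real complex_cnj_complex_of_real)

lemma Im_cinner_self [simp]: "Im (cinner x x) = 0"
  using arg_cong[OF cinner_commute[of x x], of Im] by simp

lemma cinner_self: "cinner x x = of_real ((norm x)\<^sup>2)"
proof -
  have "Re (cinner x x) = (norm x)\<^sup>2"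
    using norm_cinner[of x] norm_ge_zero[of x] by auto
  then show ?thesis by (simp add: complex_eq_iff)
qed

lemma Re_cinner_self: "Re (cinner x x) = (norm x)\<^sup>2"
  by (simp add: cinner_self)

lemma Re_cinner_commute: "Re (cinner x y) = Re (cinner y x)"
  using arg_cong[OF cinner_commute[of x y], of Re] by simp

lemma cinner_ext: "(\<And>z. cinner z a = cinner z b) \<Longrightarrow> a = b"
  using cinner_self[of "a - b"] by (simp add: cinner_diff_right)

lemma norm_add_sq:
  "(norm (x + y :: 'a::chilbert_space))\<^sup>2 = (norm x)\<^sup>2 + (norm y)\<^sup>2 + 2 * Re (cinner x y)"
  by (simp add: Re_cinner_self[symmetric] cinner_add_left cinner_add_right Re_cinner_commute[of y x])

lemma norm_diff_sq:
  "(norm (x - y :: 'a::chilbert_space))\<^sup>2 = (norm x)\<^sup>2 + (norm y)\<^sup>2 - 2 * Re (cinner x y)"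
  using norm_add_sq[of x "- y"] by simp

lemma parallelogram_law:
  "(norm (x + y :: 'a::chilbert_space))\<^sup>2 + (norm (x - y))\<^sup>2 = 2 * (norm x)\<^sup>2 + 2 * (norm y)\<^sup>2"
  by (simp add: norm_add_sq norm_diff_sq)

lemma Re_cinner_le: "Re (cinner x y) \<le> norm x * norm y"
proof -
  have "(norm (x + y))\<^sup>2 \<le> (norm x + norm y)\<^sup>2"
    by (simp add: power_mono norm_triangle_ineq)
  thus ?thesis unfolding norm_add_sq by (simp add: power2_eq_square algebra_simps)
qed

lemma norm_scaleC: "norm (scaleC a x) = cmod a * norm x"
proof -
  have "(norm (scaleC a x))\<^sup>2 = Re (cinner (scaleC a x) (scaleC a x))" by (simp add: Re_cinner_self)
  also have "\<dots> = Re (a * cnj a * cinner x x)"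
    by (simp add: cinner_scaleC_left cinner_scaleC_right mult.assoc)
  also have "a * cnj a = of_real ((cmod a)\<^sup>2)" by (simp add: complex_norm_square[symmetric])
  also have "Re (of_real ((cmod a)\<^sup>2) * cinner x x) = (cmod a * norm x)\<^sup>2"
    by (simp add: Re_cinner_self power_mult_distrib)
  finally show ?thesis by simp
qed

lemma norm_cinner_le: "cmod (cinner x y) \<le> norm x * norm y"
proof (cases "cinner x y = 0")
  case False
  define c where "c = cnj (cinner x y) / of_real (cmod (cinner x y))"
  have "c * cinner x y = of_real (cmod (cinner x y))"
    using False by (simp add: c_def field_simps complex_norm_square[symmetric] power2_eq_square)
  hence "cmod (cinner x y) = Re (cinner (scaleC c x) y)" by (simp add: cinner_scaleC_left)
  also have "\<dots> \<le> norm (scaleC c x) * norm y" by (rule Re_cinner_le)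
  finally show ?thesis using False by (simp add: norm_scaleC c_def norm_divide)
qed simp

lemma le_if_square_le_mult: "x * x \<le> x * c \<Longrightarrow> (0::real) \<le> c \<Longrightarrow> x \<le> c"
  by (cases x "0::real" rule: linorder_cases) (auto simp: mult_le_cancel_left)

lemma norm_diff_sq_midpoint:
  fixes a b v :: "'a::chilbert_space"
  shows "(norm (a - b))\<^sup>2 = 2 * (norm (v - a))\<^sup>2 + 2 * (norm (v - b))\<^sup>2 - 4 * (norm (v - midpoint a b))\<^sup>2"
proof -
  have "(v - a) + (v - b) = 2 *\<^sub>R (v - midpoint a b)"
    by (simp add: midpoint_def algebra_simps scaleR_2)
  moreover have "(v - a) - (v - b) = b - a" by simp
  ultimately show ?thesis
    using parallelogram_law[of "v - a" "v - b"] by (simp add: norm_minus_commute power_mult_distrib)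
qed

lemma Cauchy_minimizing_sequence:
  fixes S :: "'a::chilbert_space set"
  assumes "convex S" and ks: "\<And>n. ks n \<in> S"
    and lower: "\<And>k. k \<in> S \<Longrightarrow> d2 \<le> (norm (v - k))\<^sup>2"
    and approx: "\<And>n. (norm (v - ks n))\<^sup>2 \<le> d2 + inverse (real (Suc n))"
  shows "Cauchy ks"
proof (rule metric_CauchyI)
  have key: "(norm (ks m - ks n))\<^sup>2 \<le> 2 * inverse (real (Suc m)) + 2 * inverse (real (Suc n))" for m n
  proof -
    have "midpoint (ks m) (ks n) \<in> S"
      using ks \<open>convex S\<close> closed_segment_subset midpoint_in_closed_segment by blast
    from lower[OF this] show ?thesis
      using norm_diff_sq_midpoint[of "ks m" "ks n" v] approx[of m] approx[of n] by linarith
  qed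
  fix e :: real assume "e > 0"
  then obtain M where M: "inverse (real (Suc M)) < e\<^sup>2 / 4"
    using reals_Archimedean[of "e\<^sup>2 / 4"] by auto
  show "\<exists>M. \<forall>m\<ge>M. \<forall>n\<ge>M. dist (ks m) (ks n) < e"
  proof (intro exI allI impI)
    fix m n assume "m \<ge> M" "n \<ge> M"
    hence "inverse (real (Suc m)) \<le> inverse (real (Suc M))" "inverse (real (Suc n)) \<le> inverse (real (Suc M))"
      by (auto simp: field_simps)
    hence "(norm (ks m - ks n))\<^sup>2 < e\<^sup>2"
      using key[of m n] M by linarith
    hence "(dist (ks m) (ks n))\<^sup>2 < e\<^sup>2" by (simp add: dist_norm)
    thus "dist (ks m) (ks n) < e" using \<open>e > 0\<close> by (simp add: power_less_imp_less_base)
  qed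
qed

lemma closed_convex_nearest_point:
  fixes S :: "'a::chilbert_space set"
  assumes "closed S" "convex S" "S \<noteq> {}"
  obtains p where "p \<in> S" "\<And>k. k \<in> S \<Longrightarrow> norm (v - p) \<le> norm (v - k)"
proof -
  define d2 where "d2 = (INF k\<in>S. (norm (v - k))\<^sup>2)"
  have bdd: "bdd_below ((\<lambda>k. (norm (v - k))\<^sup>2) ` S)" by (rule bdd_belowI[of _ 0]) auto
  have lower: "d2 \<le> (norm (v - k))\<^sup>2" if "k \<in> S" for k
    unfolding d2_def by (rule cINF_lower[OF bdd that])
  have "\<forall>n. \<exists>k. k \<in> S \<and> (norm (v - k))\<^sup>2 < d2 + inverse (real (Suc n))"
  proof
    fix n
    have "(INF k\<in>S. (norm (v - k))\<^sup>2) < d2 + inverse (real (Suc n))" by (simp add: d2_def)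
    thus "\<exists>k. k \<in> S \<and> (norm (v - k))\<^sup>2 < d2 + inverse (real (Suc n))"
      using cINF_less_iff[OF \<open>S \<noteq> {}\<close> bdd] by blast
  qed
  then obtain ks where "\<forall>n. ks n \<in> S \<and> (norm (v - ks n))\<^sup>2 < d2 + inverse (real (Suc n))"
    by (rule choice[THEN exE])
  hence ks: "\<And>n. ks n \<in> S"
    and approx: "\<And>n. (norm (v - ks n))\<^sup>2 \<le> d2 + inverse (real (Suc n))"
    by (blast, meson less_imp_le)
  have "Cauchy ks" by (rule Cauchy_minimizing_sequence[OF \<open>convex S\<close> ks lower approx])
  then obtain p where lim: "ks \<longlonglongrightarrow> p" using Cauchy_convergent convergent_def by blast
  have "p \<in> S" using closed_sequentially[OF \<open>closed S\<close> ks lim] .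
  have "(\<lambda>n. (norm (v - ks n))\<^sup>2) \<longlonglongrightarrow> (norm (v - p))\<^sup>2"
    by (intro tendsto_intros lim)
  moreover have "(\<lambda>n. d2 + inverse (real (Suc n))) \<longlonglongrightarrow> d2 + 0"
    by (intro tendsto_intros LIMSEQ_inverse_real_of_nat)
  ultimately have "(norm (v - p))\<^sup>2 \<le> d2 + 0"
    by (rule LIMSEQ_le) (use approx in blast)
  have "norm (v - p) \<le> norm (v - k)" if "k \<in> S" for k
  proof (rule power2_le_imp_le)
    show "(norm (v - p))\<^sup>2 \<le> (norm (v - k))\<^sup>2"
      using \<open>(norm (v - p))\<^sup>2 \<le> d2 + 0\<close> lower[OF that] by linarith
  qed simp
  with \<open>p \<in> S\<close> show thesis by (rule that)
qed

text \<open>If \<open>\<langle>u, k\<rangle> \<noteq> 0\<close>, the step \<open>t = \<epsilon> \<langle>u, k\<rangle>\<close> with small \<open>\<epsilon> > 0\<close> would strictly decrease the norm.\<close>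

lemma cinner_eq_0_if_norm_le_diff_scaleC:
  assumes min: "\<And>t. norm u \<le> norm (u - scaleC t k)"
  shows "cinner k u = 0"
proof -
  define a where "a = cinner u k"
  define \<epsilon> where "\<epsilon> = 1 / ((norm k)\<^sup>2 + 1)"
  have "0 < (norm k)\<^sup>2 + 1" by (simp add: add_nonneg_pos)
  hence \<epsilon>: "\<epsilon> > 0" "\<epsilon> * (norm k)\<^sup>2 < 1" by (simp_all add: \<epsilon>_def divide_less_eq)
  define t where "t = of_real \<epsilon> * a"
  have "(norm u)\<^sup>2 \<le> (norm (u - scaleC t k))\<^sup>2"
    using min[of t] by (simp add: power_mono)
  also have "\<dots> = (norm u)\<^sup>2 + (cmod t * norm k)\<^sup>2 - 2 * Re (cnj t * a)"
    by (simp add: norm_diff_sq norm_scaleC cinner_scaleC_right a_def)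
  also have "cnj t * a = of_real (\<epsilon> * (cmod a)\<^sup>2)"
    by (simp add: t_def complex_norm_square[symmetric] mult.assoc mult.commute)
  also have "cmod t = \<epsilon> * cmod a" using \<epsilon> by (simp add: t_def norm_mult)
  finally have "\<epsilon> * (2 * (cmod a)\<^sup>2) \<le> \<epsilon> * ((cmod a)\<^sup>2 * (\<epsilon> * (norm k)\<^sup>2))"
    by (simp add: power2_eq_square algebra_simps)
  hence "2 * (cmod a)\<^sup>2 \<le> (cmod a)\<^sup>2 * (\<epsilon> * (norm k)\<^sup>2)" using \<epsilon> by simp
  also have "\<dots> \<le> (cmod a)\<^sup>2" using \<epsilon> by (intro mult_left_le) auto
  finally have "a = 0" by simp
  thus ?thesis by (metis a_def cinner_commute complex_cnj_zero)
qed

lemma riesz_representation: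
  fixes \<phi> :: "'a::chilbert_space \<Rightarrow> complex"
  assumes add: "\<And>x y. \<phi> (x + y) = \<phi> x + \<phi> y"
    and scale: "\<And>c x. \<phi> (scaleC c x) = c * \<phi> x"
    and bounded: "\<And>x. cmod (\<phi> x) \<le> M * norm x"
  shows "\<exists>w. \<forall>x. \<phi> x = cinner x w"
proof (cases "\<forall>x. \<phi> x = 0")
  case True
  thus ?thesis by (intro exI[of _ 0]) simp
next
  case False
  then obtain v where v: "\<phi> v \<noteq> 0" by blast
  have "\<phi> (r *\<^sub>R x) = r *\<^sub>R \<phi> x" for r x
    using scale[of "of_real r" x] by (simp add: scaleC_of_real scaleR_conv_of_real)
  hence "bounded_linear \<phi>"
    by (intro bounded_linear_intro[where K=M]) (auto simp: add bounded mult.commute)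
  then interpret phi: bounded_linear \<phi> .
  have "closed (\<phi> -` {0})"
    by (intro closed_vimage linear_continuous_on) (simp_all add: phi.bounded_linear_axioms)
  moreover have "convex (\<phi> -` {0})" by (intro convex_linear_vimage phi.linear) simp
  moreover have "\<phi> -` {0} \<noteq> {}" using phi.zero by blast
  ultimately obtain p where "\<phi> p = 0" and p: "\<And>k. \<phi> k = 0 \<Longrightarrow> norm (v - p) \<le> norm (v - k)"
    using closed_convex_nearest_point[of "\<phi> -` {0}" v] by auto
  define u where "u = v - p"
  have orth: "cinner k u = 0" if "\<phi> k = 0" for k
  proof (rule cinner_eq_0_if_norm_le_diff_scaleC)
    fix t
    have "\<phi> (p + scaleC t k) = 0" using \<open>\<phi> p = 0\<close> that by (simp add: phi.add scale)
    from p[OF this] show "norm u \<le> norm (u - scaleC t k)" by (simp add: u_def algebra_simps)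
  qed
  have "\<phi> u = \<phi> v" by (simp add: u_def phi.diff \<open>\<phi> p = 0\<close>)
  show ?thesis
  proof (intro exI allI)
    fix x
    have "\<phi> (x - scaleC (\<phi> x / \<phi> u) u) = 0" using \<open>\<phi> u = \<phi> v\<close> v by (simp add: phi.diff scale)
    hence "cinner (x - scaleC (\<phi> x / \<phi> u) u) u = 0" by (rule orth)
    hence "cinner x u = (\<phi> x / \<phi> u) * of_real ((norm u)\<^sup>2)"
      by (simp add: cinner_diff_left cinner_scaleC_left cinner_self)
    moreover have "u \<noteq> 0" using \<open>\<phi> u = \<phi> v\<close> v by auto
    ultimately show "\<phi> x = cinner x (scaleC (cnj (\<phi> u) / of_real ((norm u)\<^sup>2)) u)"
      using \<open>\<phi> u = \<phi> v\<close> v by (simp add: cinner_scaleC_right)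
  qed
qed

lemma cadj_adjoint:
  fixes T :: "'a::chilbert_space \<Rightarrow> 'a"
  assumes "bop T"
  shows "cinner (T x) y = cinner x (cadj T y)"
proof -
  interpret T: bounded_linear T using assms by (simp add: bop_def)
  have "\<exists>w. \<forall>x. cinner (T x) y = cinner x w" for y
  proof (rule riesz_representation[where M="onorm T * norm y"])
    show "cinner (T (x + z)) y = cinner (T x) y + cinner (T z) y" for x z
      by (simp add: T.add cinner_add_left)
    show "cinner (T (scaleC c x)) y = c * cinner (T x) y" for c x
      using assms by (simp add: bop_def cinner_scaleC_left)
    show "cmod (cinner (T x) y) \<le> onorm T * norm y * norm x" for x
    proof -
      have "cmod (cinner (T x) y) \<le> norm (T x) * norm y" by (rule norm_cinner_le)
      also have "\<dots> \<le> onorm T * norm x * norm y"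
        by (intro mult_right_mono onorm T.bounded_linear_axioms) simp
      finally show ?thesis by (simp add: algebra_simps)
    qed
  qed
  then obtain S where S: "\<forall>x y. cinner (T x) y = cinner x (S y)" by metis
  have "\<forall>x y. cinner (T x) y = cinner x (cadj T y)"
    unfolding cadj_def
  proof (rule theI[of _ S])
    fix S' assume "\<forall>x y. cinner (T x) y = cinner x (S' y)"
    with S have "S' y = S y" for y by (intro cinner_ext) metis
    thus "S' = S" by blast
  qed (rule S)
  thus ?thesis by blast
qed

lemma cadj_adjoint':
  fixes T :: "'a::chilbert_space \<Rightarrow> 'a"
  assumes "bop T"
  shows "cinner (cadj T y) x = cinner y (T x)"
  using cinner_commute[of "cadj T y" x] cinner_commute[of y "T x"] cadj_adjoint[OF assms, of x y]
  by simp

lemma norm_le_if_adjoint_bounded: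
  assumes adj: "\<And>u z. cinner (F u) z = cinner u (F' z)"
    and bound: "\<And>z. norm (F' z) \<le> c * norm z" and "0 \<le> c"
  shows "norm (F u) \<le> c * norm u"
proof -
  have "norm (F u) * norm (F u) = Re (cinner (F u) (F u))"
    by (simp add: Re_cinner_self power2_eq_square)
  also have "\<dots> = Re (cinner u (F' (F u)))" by (simp add: adj)
  also have "\<dots> \<le> norm u * norm (F' (F u))" by (rule Re_cinner_le)
  also have "\<dots> \<le> norm (F u) * (c * norm u)"
    using mult_left_mono[OF bound norm_ge_zero[of u]] by (simp add: algebra_simps)
  finally show ?thesis by (rule le_if_square_le_mult) (simp add: \<open>0 \<le> c\<close>)
qed

lemma bounded_linear_cadj:
  fixes T :: "'a::chilbert_space \<Rightarrow> 'a"
  assumes "bop T"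
  shows "bounded_linear (cadj T)"
proof (rule bounded_linear_intro[where K="onorm T"])
  have T: "bounded_linear T" using assms by (simp add: bop_def)
  show "cadj T (x + y) = cadj T x + cadj T y" for x y
    by (rule cinner_ext) (simp add: cadj_adjoint[OF assms, symmetric] cinner_add_right)
  show "cadj T (r *\<^sub>R x) = r *\<^sub>R cadj T x" for r x
    by (rule cinner_ext) (simp add: cadj_adjoint[OF assms, symmetric] cinner_scaleR_right)
  show "norm (cadj T x) \<le> norm x * onorm T" for x
    using norm_le_if_adjoint_bounded[OF cadj_adjoint' onorm onorm_pos_le] assms T
    by (simp add: mult.commute)
qed

lemma norm_sq_add_norm_sq_le:
  fixes a b :: "'a::chilbert_space"
  assumes "norm (a + b) \<le> s" "norm (a - b) \<le> d"
  shows "(norm a)\<^sup>2 + (norm b)\<^sup>2 \<le> (s\<^sup>2 + d\<^sup>2) / 2"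
proof -
  have "(norm (a + b))\<^sup>2 \<le> s\<^sup>2" "(norm (a - b))\<^sup>2 \<le> d\<^sup>2"
    using assms by (simp_all add: power_mono)
  thus ?thesis using parallelogram_law[of a b] by simp
qed

lemma power2_mult_add_le: "(a * b + c * e :: real)\<^sup>2 \<le> (a\<^sup>2 + c\<^sup>2) * (b\<^sup>2 + e\<^sup>2)"
proof -
  have "(a\<^sup>2 + c\<^sup>2) * (b\<^sup>2 + e\<^sup>2) - (a * b + c * e)\<^sup>2 = (a * e - c * b)\<^sup>2"
    by (simp add: power2_eq_square algebra_simps)
  thus ?thesis by (metis diff_ge_0_iff_ge zero_le_power2)
qed

lemma norm_adjoint_comp_add_le:
  fixes F G F' G' :: "'a::chilbert_space \<Rightarrow> 'a"
  assumes F: "\<And>u z. cinner (F' u) z = cinner u (F z)"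
    and G: "\<And>u z. cinner (G' u) z = cinner u (G z)"
    and K: "\<And>u. (norm (F u))\<^sup>2 + (norm (G u))\<^sup>2 \<le> K * (norm u)\<^sup>2" and "0 \<le> K"
  shows "norm (F' (F x) + G' (G x)) \<le> K * norm x"
proof -
  define P where "P = F' (F x) + G' (G x)"
  have "norm P * norm P = Re (cinner P P)" by (simp add: Re_cinner_self power2_eq_square)
  also have "\<dots> = Re (cinner (F' (F x)) P) + Re (cinner (G' (G x)) P)"
    by (simp add: P_def cinner_add_left)
  also have "\<dots> = Re (cinner (F x) (F P)) + Re (cinner (G x) (G P))" by (simp add: F G)
  also have "\<dots> \<le> norm (F x) * norm (F P) + norm (G x) * norm (G P)"
    by (intro add_mono Re_cinner_le)
  also have "\<dots> \<le> norm P * (K * norm x)"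
  proof (rule power2_le_imp_le)
    have "(norm (F x) * norm (F P) + norm (G x) * norm (G P))\<^sup>2
        \<le> ((norm (F x))\<^sup>2 + (norm (G x))\<^sup>2) * ((norm (F P))\<^sup>2 + (norm (G P))\<^sup>2)"
      by (rule power2_mult_add_le)
    also have "\<dots> \<le> (K * (norm x)\<^sup>2) * (K * (norm P)\<^sup>2)"
      using \<open>0 \<le> K\<close> by (intro mult_mono K) auto
    finally show "(norm (F x) * norm (F P) + norm (G x) * norm (G P))\<^sup>2 \<le> (norm P * (K * norm x))\<^sup>2"
      by (simp add: power2_eq_square algebra_simps)
  qed (use \<open>0 \<le> K\<close> in simp)
  finally show ?thesis unfolding P_def by (rule le_if_square_le_mult) (simp add: \<open>0 \<le> K\<close>)
qed

lemma onorm_cadj_comp_add_le: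
  fixes B C :: "'a::chilbert_space \<Rightarrow> 'a"
  assumes "bop B" "bop C"
  defines "K \<equiv> ((onorm (\<lambda>x. B x + cadj C x))\<^sup>2 + (onorm (\<lambda>x. B x - cadj C x))\<^sup>2) / 2"
  shows "onorm (\<lambda>x. cadj B (B x) + C (cadj C x)) \<le> K"
    and "onorm (\<lambda>x. B (cadj B x) + cadj C (C x)) \<le> K"
proof -
  have B: "bounded_linear B" using assms by (simp add: bop_def)
  note adjB = cadj_adjoint[OF \<open>bop B\<close>] cadj_adjoint'[OF \<open>bop B\<close>]
  note adjC = cadj_adjoint[OF \<open>bop C\<close>] cadj_adjoint'[OF \<open>bop C\<close>]
  have blS: "bounded_linear (\<lambda>x. B x + cadj C x)" and blD: "bounded_linear (\<lambda>x. B x - cadj C x)"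
    by (simp_all add: bounded_linear_add bounded_linear_sub B bounded_linear_cadj \<open>bop C\<close>)
  note S = onorm[OF blS] and D = onorm[OF blD]
  have "0 \<le> K" by (simp add: K_def)
  have "(norm (B u))\<^sup>2 + (norm (cadj C u))\<^sup>2 \<le> K * (norm u)\<^sup>2" for u
    using norm_sq_add_norm_sq_le[OF S D, of u] by (simp add: K_def field_simps)
  from norm_adjoint_comp_add_le[OF adjB(2) adjC(1) this \<open>0 \<le> K\<close>]
  show "onorm (\<lambda>x. cadj B (B x) + C (cadj C x)) \<le> K"
    using \<open>0 \<le> K\<close> by (intro onorm_bound) simp_all
  have S_adj: "norm (cadj B u + C u) \<le> onorm (\<lambda>x. B x + cadj C x) * norm u" for u
    by (rule norm_le_if_adjoint_bounded[OF _ S onorm_pos_le[OF blS]])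
      (simp add: cinner_add_left cinner_add_right adjB adjC)
  have D_adj: "norm (cadj B u - C u) \<le> onorm (\<lambda>x. B x - cadj C x) * norm u" for u
    by (rule norm_le_if_adjoint_bounded[OF _ D onorm_pos_le[OF blD]])
      (simp add: cinner_diff_left cinner_diff_right adjB adjC)
  have "(norm (cadj B u))\<^sup>2 + (norm (C u))\<^sup>2 \<le> K * (norm u)\<^sup>2" for u
    using norm_sq_add_norm_sq_le[OF S_adj[of u] D_adj[of u]]
    by (simp add: K_def field_simps)
  from norm_adjoint_comp_add_le[OF adjB(1) adjC(2) this \<open>0 \<le> K\<close>]
  show "onorm (\<lambda>x. B (cadj B x) + cadj C (C x)) \<le> K"
    using \<open>0 \<le> K\<close> by (intro onorm_bound) simp_all
qed

lemma norm_dsinner_le: "cmod (dsinner z u) \<le> norm z * norm u"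
proof -
  obtain x y where z: "z = (x, y)" by (cases z)
  obtain a b where u: "u = (a, b)" by (cases u)
  have "cmod (dsinner z u) \<le> cmod (cinner x a) + cmod (cinner y b)"
    by (simp add: z u dsinner_def norm_triangle_ineq)
  also have "\<dots> \<le> norm x * norm a + norm y * norm b" by (intro add_mono norm_cinner_le)
  also have "\<dots> \<le> sqrt ((norm x)\<^sup>2 + (norm y)\<^sup>2) * sqrt ((norm a)\<^sup>2 + (norm b)\<^sup>2)"
    by (rule power2_le_imp_le) (simp_all add: power_mult_distrib power2_mult_add_le)
  finally show ?thesis by (simp add: z u norm_Pair)
qed

lemma dsinner_scaleR: "dsinner (r *\<^sub>R z) (r *\<^sub>R u) = of_real (r\<^sup>2) * dsinner z u"
  by (simp add: dsinner_def cinner_scaleR_left cinner_scaleR_right power2_eq_square algebra_simps)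

lemma nrad2_upper:
  fixes T :: "'a::chilbert_space \<times> 'a \<Rightarrow> 'a \<times> 'a"
  assumes "bounded_linear T" "norm z \<le> 1"
  shows "cmod (dsinner (T z) z) \<le> nrad2 T"
  unfolding nrad2_def
proof (rule cSup_upper)
  show "bdd_above {cmod (dsinner (T z) z) |z. norm z \<le> 1}"
  proof (rule bdd_aboveI)
    fix r assume "r \<in> {cmod (dsinner (T z) z) |z. norm z \<le> 1}"
    then obtain z where "norm z \<le> 1" "r = cmod (dsinner (T z) z)" by blast
    hence "r \<le> norm (T z) * norm z" using norm_dsinner_le by simp
    also have "\<dots> \<le> onorm T * norm z * norm z"
      by (intro mult_right_mono onorm assms(1)) simp
    also have "\<dots> \<le> onorm T * 1" unfolding mult.assoc
      using \<open>norm z \<le> 1\<close> by (intro mult_left_mono mult_le_one onorm_pos_le assms(1)) simp_all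
    finally show "r \<le> onorm T" by simp
  qed
qed (use assms(2) in blast)

lemma nrad2_nonneg:
  fixes T :: "'a::chilbert_space \<times> 'a \<Rightarrow> 'a \<times> 'a"
  assumes "bounded_linear T"
  shows "0 \<le> nrad2 T"
  using nrad2_upper[OF assms, of 0] linear_0[OF bounded_linear.linear[OF assms]]
  by (simp add: dsinner_def)

lemma norm_dsinner_le_nrad2:
  fixes T :: "'a::chilbert_space \<times> 'a \<Rightarrow> 'a \<times> 'a"
  assumes "bounded_linear T"
  shows "cmod (dsinner (T z) z) \<le> nrad2 T * (norm z)\<^sup>2"
proof (cases "z = 0")
  case True
  thus ?thesis using linear_0[OF bounded_linear.linear[OF assms]]
    by (simp add: dsinner_def zero_prod_def)
next
  case False
  define r where "r = inverse (norm z)"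
  have "r > 0" "r * norm z = 1" using False by (simp_all add: r_def)
  hence "cmod (dsinner (T (r *\<^sub>R z)) (r *\<^sub>R z)) \<le> nrad2 T"
    by (intro nrad2_upper assms) simp
  also have "dsinner (T (r *\<^sub>R z)) (r *\<^sub>R z) = of_real (r\<^sup>2) * dsinner (T z) z"
    using dsinner_scaleR[of r "T z" z] linear_scale[OF bounded_linear.linear[OF assms]] by simp
  finally have "r\<^sup>2 * cmod (dsinner (T z) z) \<le> (r * norm z)\<^sup>2 * nrad2 T"
    by (simp add: norm_mult norm_power \<open>r * norm z = 1\<close>)
  thus ?thesis using \<open>r > 0\<close> by (simp add: power_mult_distrib mult.commute)
qed

lemma bounded_linear_opmat:
  assumes "bounded_linear A" "bounded_linear B" "bounded_linear C" "bounded_linear D"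
  shows "bounded_linear (opmat A B C D)"
proof -
  have "opmat A B C D = (\<lambda>z. (A (fst z) + B (snd z), C (fst z) + D (snd z)))"
    by (auto simp: opmat_def)
  thus ?thesis
    using assms by (auto intro!: bounded_linear_Pair bounded_linear_add
        bounded_linear_compose[OF _ bounded_linear_fst] bounded_linear_compose[OF _ bounded_linear_snd])
qed

lemma norm_le_if_Re_cinner_le:
  fixes F :: "'a::chilbert_space \<Rightarrow> 'a"
  assumes "bounded_linear F" and bound: "\<And>y x. Re (cinner (F y) x) \<le> M * ((norm x)\<^sup>2 + (norm y)\<^sup>2)"
  shows "norm (F y) \<le> 2 * M * norm y"
proof (cases "F y = 0")
  case True
  have "0 \<le> M * (norm y)\<^sup>2" using bound[of y 0] by simp
  thus ?thesis using True by (cases "y = 0") (auto simp: zero_le_mult_iff)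
next
  case False
  hence "y \<noteq> 0" using linear_0[OF bounded_linear.linear[OF assms(1)]] by force
  define x where "x = (norm y / norm (F y)) *\<^sub>R F y"
  have "norm x = norm y" using False by (simp add: x_def)
  have "norm y * norm (F y) = Re (cinner (F y) x)"
    using False by (simp add: x_def cinner_scaleR_right Re_cinner_self power2_eq_square)
  also have "\<dots> \<le> norm y * (2 * M * norm y)"
    using bound[of y x] \<open>norm x = norm y\<close> by (simp add: power2_eq_square algebra_simps)
  finally show ?thesis using \<open>y \<noteq> 0\<close> by simp
qed

lemma onorm_add_cadj_le_nrad2:
  fixes B C :: "'a::chilbert_space \<Rightarrow> 'a"
  assumes "bop B" "bop C"
  defines "w \<equiv> nrad2 (opmat (\<lambda>x. 0) B C (\<lambda>x. 0))"
  shows "onorm (\<lambda>x. B x + cadj C x) \<le> 2 * w"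
    and "onorm (\<lambda>x. B x - cadj C x) \<le> 2 * w"
proof -
  have B: "bounded_linear B" and C: "bounded_linear C" using assms by (simp_all add: bop_def)
  have T: "bounded_linear (opmat (\<lambda>x. 0) B C (\<lambda>x. 0))"
    by (intro bounded_linear_opmat B C bounded_linear_zero)
  have "0 \<le> w" unfolding w_def using T by (rule nrad2_nonneg)
  have q: "cmod (cinner (B y) x + cnj (cinner (cadj C y) x)) \<le> w * ((norm x)\<^sup>2 + (norm y)\<^sup>2)" for x y
    using norm_dsinner_le_nrad2[OF T, of "(x, y)"] cadj_adjoint[OF \<open>bop C\<close>, of x y]
    by (simp add: w_def opmat_def dsinner_def norm_Pair cinner_commute[of x])
  have "Re (cinner (B y + cadj C y) x) \<le> w * ((norm x)\<^sup>2 + (norm y)\<^sup>2)" for x y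
    using q[where x=x and y=y] complex_Re_le_cmod[of "cinner (B y) x + cnj (cinner (cadj C y) x)"]
    by (simp add: cinner_add_left)
  thus "onorm (\<lambda>x. B x + cadj C x) \<le> 2 * w"
    using \<open>0 \<le> w\<close> by (intro onorm_bound norm_le_if_Re_cinner_le)
      (simp_all add: bounded_linear_add B bounded_linear_cadj \<open>bop C\<close>)
  have "Re (cinner (B y - cadj C y) x) \<le> w * ((norm x)\<^sup>2 + (norm y)\<^sup>2)" for x y
    using q[where x="scaleC \<i> x" and y=y] abs_Im_le_cmod[of "cinner (B y) (scaleC \<i> x) + cnj (cinner (cadj C y) (scaleC \<i> x))"]
    by (simp add: cinner_diff_left cinner_scaleC_right norm_scaleC)
  thus "onorm (\<lambda>x. B x - cadj C x) \<le> 2 * w"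
    using \<open>0 \<le> w\<close> by (intro onorm_bound norm_le_if_Re_cinner_le)
      (simp_all add: bounded_linear_sub B bounded_linear_cadj \<open>bop C\<close>)
qed

lemma add_abs_diff_eq_max: "(x + y) / 2 + \<bar>x - y\<bar> / 2 = max x (y :: real)"
  by (simp add: max_def abs_if field_simps)

theorem mainTheorem4:
  fixes B C :: "'a::chilbert_space \<Rightarrow> 'a"
  assumes "bop B" and "bop C"
  shows "(nrad2 (opmat (\<lambda>x. 0) B C (\<lambda>x. 0)))\<^sup>2 \<ge>
     1/4 * max (onorm (\<lambda>x. cadj B (B x) + C (cadj C x)))
               (onorm (\<lambda>x. B (cadj B x) + cadj C (C x)))
     + 1/8 * \<bar>(onorm (\<lambda>x. B x + cadj C x))\<^sup>2 - (onorm (\<lambda>x. B x - cadj C x))\<^sup>2\<bar>"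
proof -
  define w where "w = nrad2 (opmat (\<lambda>x. 0) B C (\<lambda>x. 0))"
  define s where "s = onorm (\<lambda>x. B x + cadj C x)"
  define d where "d = onorm (\<lambda>x. B x - cadj C x)"
  have B: "bounded_linear B" using assms by (simp add: bop_def)
  have "0 \<le> s" "0 \<le> d" unfolding s_def d_def
    by (simp_all add: onorm_pos_le bounded_linear_add bounded_linear_sub B bounded_linear_cadj assms)
  moreover have "s \<le> 2 * w" "d \<le> 2 * w"
    using onorm_add_cadj_le_nrad2[OF assms] by (simp_all add: w_def s_def d_def)
  ultimately have "s\<^sup>2 \<le> 4 * w\<^sup>2" "d\<^sup>2 \<le> 4 * w\<^sup>2"
    using power_mono[of s "2 * w" 2] power_mono[of d "2 * w" 2] by (simp_all add: power_mult_distrib)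
  have "1/4 * max (onorm (\<lambda>x. cadj B (B x) + C (cadj C x))) (onorm (\<lambda>x. B (cadj B x) + cadj C (C x)))
      + 1/8 * \<bar>s\<^sup>2 - d\<^sup>2\<bar> \<le> ((s\<^sup>2 + d\<^sup>2) / 2 + \<bar>s\<^sup>2 - d\<^sup>2\<bar> / 2) / 4"
    using onorm_cadj_comp_add_le[OF assms, folded s_def d_def] by simp
  also have "\<dots> = max (s\<^sup>2) (d\<^sup>2) / 4" by (simp only: add_abs_diff_eq_max)
  also have "\<dots> \<le> w\<^sup>2" using \<open>s\<^sup>2 \<le> 4 * w\<^sup>2\<close> \<open>d\<^sup>2 \<le> 4 * w\<^sup>2\<close> by simp
  finally show ?thesis by (simp add: w_def s_def d_def)
qed

end
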